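(* In the two-flow network-coding model, the conditional success probabilities of an arriving type-1 packet are: $$\mathbb{P}(\text{success}\mid L=0)=1-e^{-\mu d};$$ $$\mathbb{P}(\text{success}\mid L=1)=\mathbb{P}(\text{success}\mid L=2,N=1)=\mathbb{P}(\text{success}\mid L=2,N=3)=\int_0^d \mu e^{-\mu t}e^{-\lambda_1 t}(1+\lambda_2 t)e^{-\lambda_2 t}\big(1-e^{-\mu(d-t)}\big)\,dt;$$ $$\mathbb{P}(\text{success}\mid L=2,N=2)=\int_0^d \mu e^{-\mu t}e^{-\lambda_1 t}e^{-\lambda_2 t}\big(1-e^{-\mu(d-t)}\big)\,dt.$$
   Context: Two-flow network-coding model: a single server with one extra waiting ("buffer") position. Type-1 and type-2 packets arrive according to independent Poisson processes with rates $\lambda_1,\lambda_2>0$. Service times are i.i.d. exponential with rate $\mu>0$, independent of arrivals; service is non-preemptive. A packet arriving to an empty system immediately enters service. A packet arriving while the server is busy and the buffer is empty is placed in the buffer. If the buffer holds a native (type-1 or type-2) packet of the other flow, the arriving packet is XOR-coded with it, and the buffer then holds one coded packet (type-3). If the buffer holds a native packet of the same flow, or a coded packet, the buffered packet is discarded and replaced by the arriving packet. When the server becomes free, the buffered packet (if any) enters service. Every native packet arriving at time $s$ has absolute deadline $s+d$ (fixed $d>0$); a buffered native packet is removed when its deadline expires, and a coded packet is removed when the later of the two deadlines of its constituent native packets expires. A type-1 packet is successfully served if it (or the coded packet containing it) completes service no later than its own absolute deadline. State seen by the arriving packet: $L\in\{0,1,2\}$ is the number of packets in the system including the one in service (coded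 packet counts as one), and when $L=2$, $N\in\{1,2,3\}$ is the type of the buffered packet. $\mathbb{P}(\text{success}\mid\cdot)$ is the probability that a type-1 packet arriving in the given state is successfully served. *)

theory Defs
  imports "HOL-Probability.Probability"
begin

(* BNat f tg dl : a native packet of flow f (1 or 2), tg = it is the tagged type-1 packet,
                  absolute deadline dl.
   BCoded tg dl : a coded (type-3) packet, tg = it contains the tagged packet,
                  dl = later of the two constituent deadlines. *)
datatype pbuf = BEmpty | BNat nat bool real | BCoded bool real

(* State seen by the arriving (tagged) packet:
   Idle         : L = 0
   Busy BEmpty  : L = 1
   Busy (BNat n _ _) : L = 2, N = n (n = 1, 2);  Busy (BCoded _ _) : L = 2, N = 3 *)
datatype sysstate = Idle | Busy pbuf

definition expire :: "real \<Rightarrow> pbuf \<Rightarrow> pbuf" where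
  "expire t b = (case b of
      BEmpty \<Rightarrow> BEmpty
    | BNat f tg dl \<Rightarrow> (if dl < t then BEmpty else b)
    | BCoded tg dl \<Rightarrow> (if dl < t then BEmpty else b))"

definition arrive :: "real \<Rightarrow> real \<Rightarrow> nat \<Rightarrow> bool \<Rightarrow> pbuf \<Rightarrow> pbuf" where
  "arrive d t f tg b = (case expire t b of
      BEmpty \<Rightarrow> BNat f tg (t + d)
    | BNat g tg' dl \<Rightarrow> (if g \<noteq> f then BCoded (tg \<or> tg') (max dl (t + d)) else BNat f tg (t + d))
    | BCoded tg' dl \<Rightarrow> BNat f tg (t + d))"

definition tagged :: "pbuf \<Rightarrow> bool" where
  "tagged b = (case b of BEmpty \<Rightarrow> False | BNat f tg dl \<Rightarrow> tg | BCoded tg dl \<Rightarrow> tg)"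

(* The tagged type-1 packet arrives at time 0 (deadline d) in state st.
   R = residual service time of the packet in service, S = service time of the
   tagged packet (or the coded packet containing it), arrs = time-ordered list of
   (arrival time, flow) of the later arrivals before time R. *)
definition success :: "real \<Rightarrow> sysstate \<Rightarrow> real \<Rightarrow> real \<Rightarrow> (real \<times> nat) list \<Rightarrow> bool" where
  "success d st R S arrs = (case st of
      Idle \<Rightarrow> S \<le> d
    | Busy b \<Rightarrow>
        (let b1 = arrive d 0 1 True b;
             bR = expire R (foldl (\<lambda>bb (t, f). arrive d t f False bb) b1 arrs)
         in tagged bR \<and> R + S \<le> d))"

datatype rv_idx = Resid | Serv | IA1 nat | IA2 nat

definition ia :: "nat \<Rightarrow> nat \<Rightarrow> rv_idx" where
  "ia f k = (if f = 1 then IA1 k else IA2 k)"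

definition arr_time :: "(rv_idx \<Rightarrow> 'a \<Rightarrow> real) \<Rightarrow> nat \<Rightarrow> nat \<Rightarrow> 'a \<Rightarrow> real" where
  "arr_time X f n \<omega> = (\<Sum>k\<le>n. X (ia f k) \<omega>)"

definition arr_times :: "(rv_idx \<Rightarrow> 'a \<Rightarrow> real) \<Rightarrow> nat \<Rightarrow> 'a \<Rightarrow> real set" where
  "arr_times X f \<omega> = {arr_time X f n \<omega> | n. arr_time X f n \<omega> < X Resid \<omega>}"

(* time-ordered list of (arrival time, flow) of all arrivals before the residual service
   time ends (simultaneous arrivals have probability 0) *)
definition arrivals :: "(rv_idx \<Rightarrow> 'a \<Rightarrow> real) \<Rightarrow> 'a \<Rightarrow> (real \<times> nat) list" where
  "arrivals X \<omega> = map (\<lambda>t. (t, if t \<in> arr_times X 1 \<omega> then 1 else 2))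
     (sorted_list_of_set (arr_times X 1 \<omega> \<union> arr_times X 2 \<omega>))"

definition succ_prob :: "'a measure \<Rightarrow> (rv_idx \<Rightarrow> 'a \<Rightarrow> real) \<Rightarrow> real \<Rightarrow> sysstate \<Rightarrow> real" where
  "succ_prob M X d st =
     measure M {\<omega> \<in> space M. success d st (X Resid \<omega>) (X Serv \<omega>) (arrivals X \<omega>)}"

end

theory Submission
  imports Defs
begin

(* In a busy state the tagged type-1 packet is buffered at once: it replaces a buffered type-1
   or coded packet, and it is XOR-ed with a buffered type-2 packet. It is served in time iff it
   is still in the buffer when the packet in service leaves, after the residual service time R,
   and its own service time S satisfies R + S <= d. A buffered native tagged packet survives iff
   before R no type-1 packet and at most one type-2 packet arrives (that one is coded with it,
   and any further arrival evicts the coded packet); a coded tagged packet survives iff nothing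
   arrives before R. Interarrival times are almost surely positive and not all smaller than d,
   so almost surely only finitely many packets arrive before R, and the two events become
   R + S <= d, R <= T1, R <= T2, where T1 is the first type-1 arrival time and T2 the second
   (respectively first) type-2 arrival time, an Erlang variable. Conditioning on R = t and using
   independence yields the integrals. *)

section \<open>Buffer dynamics\<close>

definition arrive_step :: "real \<Rightarrow> pbuf \<Rightarrow> real \<times> nat \<Rightarrow> pbuf" where
  "arrive_step d = (\<lambda>b (t, f). arrive d t f False b)"

lemma not_tagged_expire: "\<not> tagged b \<Longrightarrow> \<not> tagged (expire t b)"
  by (cases b) (simp_all add: expire_def tagged_def)

lemma not_tagged_arrive: "\<not> tagged b \<Longrightarrow> \<not> tagged (arrive d t f False b)"
  using not_tagged_expire[of b t] by (cases "expire t b") (simp_all add: arrive_def tagged_def)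

lemma not_tagged_foldl_arrive_step: "\<not> tagged b \<Longrightarrow> \<not> tagged (foldl (arrive_step d) b xs)"
proof (induction xs arbitrary: b)
  case (Cons x xs)
  then show ?case
    by (cases x) (simp add: arrive_step_def not_tagged_arrive)
qed simp

lemma tagged_after_arrivals_coded:
  "tagged (expire R (foldl (arrive_step d) (BCoded True D) xs)) \<longleftrightarrow> xs = [] \<and> R \<le> D"
proof (cases xs)
  case (Cons x xs')
  have "\<not> tagged (arrive_step d (BCoded True D) x)"
    by (cases x) (simp add: arrive_step_def arrive_def expire_def tagged_def)
  then show ?thesis
    using Cons by (simp add: not_tagged_expire not_tagged_foldl_arrive_step)
qed (simp add: expire_def tagged_def)

lemma tagged_after_arrivals_nat1:
  assumes "\<forall>(t, f) \<in> set xs. f = 1 \<or> f = 2"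
  shows "tagged (expire R (foldl (arrive_step d) (BNat 1 True D) xs)) \<longleftrightarrow>
    (xs = [] \<and> R \<le> D) \<or> (\<exists>t. xs = [(t, 2)] \<and> t \<le> D \<and> R \<le> max D (t + d))"
proof (cases xs)
  case Nil
  then show ?thesis by (simp add: expire_def tagged_def)
next
  case (Cons x xs')
  obtain t f where x: "x = (t, f)" by fastforce
  show ?thesis
  proof (cases "D < t \<or> f = 1")
    case True
    then have "\<not> tagged (arrive_step d (BNat 1 True D) x)"
      by (auto simp: x arrive_step_def arrive_def expire_def tagged_def)
    then show ?thesis
      using Cons x True by (auto simp: not_tagged_expire not_tagged_foldl_arrive_step)
  next
    case False
    with assms Cons x have "f = 2" by auto
    with False have "arrive_step d (BNat 1 True D) x = BCoded True (max D (t + d))"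
      by (simp add: x arrive_step_def arrive_def expire_def)
    then show ?thesis
      using Cons x False \<open>f = 2\<close> tagged_after_arrivals_coded[of R d "max D (t + d)" xs'] by auto
  qed
qed

lemma success_Busy:
  "success d (Busy b) R S xs \<longleftrightarrow>
    tagged (expire R (foldl (arrive_step d) (arrive d 0 1 True b) xs)) \<and> R + S \<le> d"
  by (simp add: success_def arrive_step_def Let_def)

lemma arrive_tagged_BEmpty: "arrive d 0 1 True BEmpty = BNat 1 True d"
  by (simp add: arrive_def expire_def)

lemma arrive_tagged_BNat1: "0 < dl \<Longrightarrow> arrive d 0 1 True (BNat 1 False dl) = BNat 1 True d"
  by (simp add: arrive_def expire_def)

lemma arrive_tagged_BCoded: "0 < dl \<Longrightarrow> arrive d 0 1 True (BCoded False dl) = BNat 1 True d"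
  by (simp add: arrive_def expire_def)

lemma arrive_tagged_BNat2:
  "0 < dl \<Longrightarrow> dl \<le> d \<Longrightarrow> arrive d 0 1 True (BNat 2 False dl) = BCoded True d"
  by (simp add: arrive_def expire_def max_def)

lemma infinite_values_below_iff:
  fixes s :: "nat \<Rightarrow> 'b::linorder"
  shows "infinite {s n |n. s n < r} \<longleftrightarrow> (\<forall>N. \<exists>n. s n < r \<and> (\<forall>k\<le>N. s k \<noteq> s n))"
proof
  assume inf: "infinite {s n |n. s n < r}"
  show "\<forall>N. \<exists>n. s n < r \<and> (\<forall>k\<le>N. s k \<noteq> s n)"
  proof
    fix N
    have "\<not> {s n |n. s n < r} \<subseteq> s ` {..N}"
    proof
      assume "{s n |n. s n < r} \<subseteq> s ` {..N}"
      then have "finite {s n |n. s n < r}"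
        by (rule finite_subset) simp
      with inf show False
        by contradiction
    qed
    then obtain n where "s n < r" and "s n \<notin> s ` {..N}"
      by blast
    then show "\<exists>n. s n < r \<and> (\<forall>k\<le>N. s k \<noteq> s n)"
      by (metis atMost_iff image_eqI)
  qed
next
  assume unbounded: "\<forall>N. \<exists>n. s n < r \<and> (\<forall>k\<le>N. s k \<noteq> s n)"
  show "infinite {s n |n. s n < r}"
  proof
    assume fin: "finite {s n |n. s n < r}"
    have "{s n |n. s n < r} \<subseteq> s ` {n. s n < r}"
      by blast
    from finite_subset_image[OF fin this] obtain C
      where C: "finite C" "{s n |n. s n < r} = s ` C"
      by blast
    from finite_nat_bounded[OF C(1)] obtain N where N: "C \<subseteq> {..<N}" ..
    obtain n where n: "s n < r" "\<forall>k\<le>N. s k \<noteq> s n"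
      using unbounded by blast
    then have "s n \<in> s ` C"
      using C(2) by blast
    then obtain c where "s n = s c" and "c \<in> C"
      by (rule imageE)
    moreover from N \<open>c \<in> C\<close> have "c \<le> N"
      by auto
    ultimately show False
      using n(2) by auto
  qed
qed

lemma ex_values_below_eq_singleton_iff:
  "(\<exists>t. {s n |n. s n < r} = {t} \<and> P t) \<longleftrightarrow>
    (\<exists>n. s n < r) \<and> (\<forall>n m. s n < r \<longrightarrow> s m < r \<longrightarrow> s n = s m) \<and> (\<forall>n. s n < r \<longrightarrow> P (s n))"
  by (auto simp: set_eq_iff) (metis)+

lemma values_below_eq_empty_iff:
  fixes s :: "nat \<Rightarrow> 'b::linorder"
  assumes "mono s"
  shows "{s n |n. s n < r} = {} \<longleftrightarrow> r \<le> s 0"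
proof
  assume "{s n |n. s n < r} = {}"
  then have "\<not> s 0 < r"
    by blast
  then show "r \<le> s 0"
    by simp
next
  assume "r \<le> s 0"
  moreover have "s 0 \<le> s n" for n
    using assms by (simp add: monoD)
  ultimately have "\<not> s n < r" for n
    by (metis leD order.trans)
  then show "{s n |n. s n < r} = {}"
    by blast
qed

lemma values_below_eq_singleton_iff:
  fixes s :: "nat \<Rightarrow> 'b::linorder"
  assumes "strict_mono s"
  shows "{s n |n. s n < r} = {t} \<longleftrightarrow> s 0 < r \<and> r \<le> s 1 \<and> t = s 0"
proof
  assume eq: "{s n |n. s n < r} = {t}"
  then have "s 0 < r"
    using values_below_eq_empty_iff[OF strict_mono_mono[OF assms]] by fastforce
  then have "s 0 \<in> {s n |n. s n < r}"
    by blast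
  with eq have "t = s 0"
    by simp
  moreover have "\<not> s 1 < r"
  proof
    assume "s 1 < r"
    then have "s 1 \<in> {s n |n. s n < r}"
      by blast
    with eq \<open>t = s 0\<close> strict_monoD[OF assms, of 0 1] show False
      by simp
  qed
  ultimately show "s 0 < r \<and> r \<le> s 1 \<and> t = s 0"
    using \<open>s 0 < r\<close> by simp
next
  assume H: "s 0 < r \<and> r \<le> s 1 \<and> t = s 0"
  have "n = 0" if "s n < r" for n
  proof (rule ccontr)
    assume "n \<noteq> 0"
    then have "s 1 \<le> s n"
      using strict_mono_mono[OF assms] by (simp add: monoD)
    with H that show False
      by (metis leD order.trans)
  qed
  with H show "{s n |n. s n < r} = {t}"
    by blast
qed

lemma finite_values_below:
  fixes s :: "nat \<Rightarrow> 'b::linorder"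
  assumes mono: "mono s" and r: "r \<le> s m"
  shows "finite {s n |n. s n < r}"
proof (rule finite_subset)
  show "{s n |n. s n < r} \<subseteq> s ` {..<m}"
  proof
    fix x
    assume "x \<in> {s n |n. s n < r}"
    then obtain n where n: "x = s n" "s n < r"
      by blast
    have "n < m"
    proof (rule ccontr)
      assume "\<not> n < m"
      then have "s m \<le> s n"
        using mono by (simp add: monoD)
      with n(2) r show False
        by (metis leD order.trans)
    qed
    with n(1) show "x \<in> s ` {..<m}"
      by blast
  qed
qed simp

lemma strict_mono_arr_time:
  assumes "\<And>k. 0 < X (ia f k) \<omega>"
  shows "strict_mono (\<lambda>n. arr_time X f n \<omega>)"
  unfolding strict_mono_Suc_iff arr_time_def using assms by simp

lemma interarrival_le_arr_time:
  assumes "\<And>k. 0 \<le> X (ia f k) \<omega>"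
  shows "X (ia f k) \<omega> \<le> arr_time X f k \<omega>"
  unfolding arr_time_def by (rule member_le_sum) (use assms in auto)

lemma arr_times_eq_empty_iff: "arr_times X f \<omega> = {} \<longleftrightarrow> (\<forall>n. \<not> arr_time X f n \<omega> < X Resid \<omega>)"
  by (auto simp: arr_times_def)

lemma arrivals_flows: "\<forall>(t, f) \<in> set (arrivals X \<omega>). f = 1 \<or> f = 2"
  by (auto simp: arrivals_def)

(* sorted_list_of_set is [] on infinite sets, so infinitely many arrivals also give []. *)
lemma arrivals_eq_Nil_iff:
  "arrivals X \<omega> = [] \<longleftrightarrow> (arr_times X 1 \<omega> = {} \<and> arr_times X 2 \<omega> = {})
     \<or> infinite (arr_times X 1 \<omega>) \<or> infinite (arr_times X 2 \<omega>)"
  by (cases "finite (arr_times X 1 \<omega> \<union> arr_times X 2 \<omega>)") (auto simp: arrivals_def)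

lemma ex_arrivals_eq_single_iff:
  "(\<exists>t. arrivals X \<omega> = [(t, 2)] \<and> P t) \<longleftrightarrow>
     arr_times X 1 \<omega> = {} \<and> (\<exists>t. arr_times X 2 \<omega> = {t} \<and> P t)"
proof -
  let ?A = "arr_times X 1 \<omega>" and ?B = "arr_times X 2 \<omega>"
  have sorted_single: "sorted_list_of_set A = [t] \<longleftrightarrow> A = {t}" for A :: "real set" and t
  proof
    assume sorted: "sorted_list_of_set A = [t]"
    then have "finite A"
      by (metis list.distinct(1) sorted_list_of_set.fold_insort_key.infinite)
    with sorted show "A = {t}"
      by (metis list.set(1,2) set_sorted_list_of_set)
  qed simp
  have map_single: "map (\<lambda>t. (t, g t)) xs = [(t, c)] \<longleftrightarrow> xs = [t] \<and> g t = c"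
    for g :: "real \<Rightarrow> nat" and xs t c
    by (cases xs) auto
  have single: "arrivals X \<omega> = [(t, 2)] \<longleftrightarrow> ?A \<union> ?B = {t} \<and> t \<notin> ?A" for t
    unfolding arrivals_def map_single sorted_single by simp
  have split: "?A \<union> ?B = {t} \<and> t \<notin> ?A \<longleftrightarrow> ?A = {} \<and> ?B = {t}" for t
    by (simp add: Un_singleton_iff) fastforce
  show ?thesis
    unfolding single split by blast
qed

lemma success_nat1_iff:
  assumes "arrive d 0 1 True b = BNat 1 True d"
  shows "success d (Busy b) R S (arrivals X \<omega>) \<longleftrightarrow> R + S \<le> d \<and>
    (arrivals X \<omega> = [] \<and> R \<le> d \<or> (\<exists>t. arrivals X \<omega> = [(t, 2)] \<and> t \<le> d \<and> R \<le> max d (t + d)))"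
  unfolding success_Busy assms tagged_after_arrivals_nat1[OF arrivals_flows] by auto

lemma success_coded_iff:
  assumes "arrive d 0 1 True b = BCoded True d"
  shows "success d (Busy b) R S (arrivals X \<omega>) \<longleftrightarrow> R + S \<le> d \<and> arrivals X \<omega> = [] \<and> R \<le> d"
  unfolding success_Busy assms tagged_after_arrivals_coded by auto

(* On a regular outcome only finitely many packets of each flow arrive before any time below d;
   regular outcomes have probability one. *)
definition regular_outcome :: "(rv_idx \<Rightarrow> 'a \<Rightarrow> real) \<Rightarrow> real \<Rightarrow> 'a \<Rightarrow> bool" where
  "regular_outcome X d \<omega> \<longleftrightarrow> 0 < X Serv \<omega> \<and>
     (\<forall>f\<in>{1, 2}. (\<forall>k. 0 < X (ia f k) \<omega>) \<and> (\<exists>k. d \<le> X (ia f k) \<omega>))"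

lemma
  assumes reg: "regular_outcome X d \<omega>" and R: "X Resid \<omega> < d"
  shows arrivals_regular_eq_Nil_iff:
      "arrivals X \<omega> = [] \<longleftrightarrow> X Resid \<omega> \<le> arr_time X 1 0 \<omega> \<and> X Resid \<omega> \<le> arr_time X 2 0 \<omega>"
    and ex_arrivals_regular_eq_single_iff:
      "(\<exists>t. arrivals X \<omega> = [(t, 2)] \<and> P t) \<longleftrightarrow> X Resid \<omega> \<le> arr_time X 1 0 \<omega> \<and>
         arr_time X 2 0 \<omega> < X Resid \<omega> \<and> X Resid \<omega> \<le> arr_time X 2 1 \<omega> \<and> P (arr_time X 2 0 \<omega>)"
proof -
  have mono: "strict_mono (\<lambda>n. arr_time X f n \<omega>)" if "f \<in> {1, 2}" for f
    using reg that by (intro strict_mono_arr_time) (auto simp: regular_outcome_def)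
  have fin: "finite (arr_times X f \<omega>)" if "f \<in> {1, 2}" for f
  proof -
    from reg that obtain k where large: "d \<le> X (ia f k) \<omega>" and pos: "\<forall>k. 0 < X (ia f k) \<omega>"
      by (auto simp: regular_outcome_def)
    have "X (ia f k) \<omega> \<le> arr_time X f k \<omega>"
      using pos by (intro interarrival_le_arr_time) (simp add: less_imp_le)
    with large R have "X Resid \<omega> \<le> arr_time X f k \<omega>"
      by linarith
    then show ?thesis
      unfolding arr_times_def by (rule finite_values_below[OF strict_mono_mono[OF mono[OF that]]])
  qed
  have empty: "arr_times X f \<omega> = {} \<longleftrightarrow> X Resid \<omega> \<le> arr_time X f 0 \<omega>" if "f \<in> {1, 2}" for f
    unfolding arr_times_def by (rule values_below_eq_empty_iff[OF strict_mono_mono[OF mono[OF that]]])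
  show "arrivals X \<omega> = [] \<longleftrightarrow> X Resid \<omega> \<le> arr_time X 1 0 \<omega> \<and> X Resid \<omega> \<le> arr_time X 2 0 \<omega>"
    using fin empty by (simp add: arrivals_eq_Nil_iff)
  show "(\<exists>t. arrivals X \<omega> = [(t, 2)] \<and> P t) \<longleftrightarrow> X Resid \<omega> \<le> arr_time X 1 0 \<omega> \<and>
      arr_time X 2 0 \<omega> < X Resid \<omega> \<and> X Resid \<omega> \<le> arr_time X 2 1 \<omega> \<and> P (arr_time X 2 0 \<omega>)"
    unfolding ex_arrivals_eq_single_iff empty[OF insertI1] arr_times_def[of X 2]
      values_below_eq_singleton_iff[OF mono[OF insertI2[OF singletonI]]] by auto
qed

lemma success_nat1_regular:
  assumes reg: "regular_outcome X d \<omega>" and b: "arrive d 0 1 True b = BNat 1 True d"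
  shows "success d (Busy b) (X Resid \<omega>) (X Serv \<omega>) (arrivals X \<omega>) \<longleftrightarrow>
    X Resid \<omega> + X Serv \<omega> \<le> d \<and> X Resid \<omega> \<le> arr_time X 1 0 \<omega> \<and> X Resid \<omega> \<le> arr_time X 2 1 \<omega>"
proof (cases "X Resid \<omega> + X Serv \<omega> \<le> d")
  case True
  with reg have R: "X Resid \<omega> < d"
    by (auto simp: regular_outcome_def)
  have "arr_time X 2 0 \<omega> < arr_time X 2 1 \<omega>"
    using reg by (intro strict_monoD[OF strict_mono_arr_time]) (auto simp: regular_outcome_def)
  then show ?thesis
    unfolding success_nat1_iff[OF b] arrivals_regular_eq_Nil_iff[OF reg R]
      ex_arrivals_regular_eq_single_iff[OF reg R] using True R by auto
qed (simp add: success_nat1_iff[OF b])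

lemma success_coded_regular:
  assumes reg: "regular_outcome X d \<omega>" and b: "arrive d 0 1 True b = BCoded True d"
  shows "success d (Busy b) (X Resid \<omega>) (X Serv \<omega>) (arrivals X \<omega>) \<longleftrightarrow>
    X Resid \<omega> + X Serv \<omega> \<le> d \<and> X Resid \<omega> \<le> arr_time X 1 0 \<omega> \<and> X Resid \<omega> \<le> arr_time X 2 0 \<omega>"
proof (cases "X Resid \<omega> + X Serv \<omega> \<le> d")
  case True
  with reg have R: "X Resid \<omega> < d"
    by (auto simp: regular_outcome_def)
  then show ?thesis
    unfolding success_coded_iff[OF b] arrivals_regular_eq_Nil_iff[OF reg R] using True by auto
qed (simp add: success_coded_iff[OF b])

section \<open>Distributional lemmas\<close>

definition erlang_survival :: "nat \<Rightarrow> real \<Rightarrow> real \<Rightarrow> real" where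
  "erlang_survival k l t = (\<Sum>n\<le>k. (l * t) ^ n * exp (- l * t) / fact n)"

lemma erlang_survival_0: "erlang_survival 0 l t = exp (- l * t)"
  by (simp add: erlang_survival_def)

lemma erlang_survival_1: "erlang_survival 1 l t = (1 + l * t) * exp (- l * t)"
  by (simp add: erlang_survival_def algebra_simps)

lemma erlang_survival_nonneg: "0 \<le> l \<Longrightarrow> 0 \<le> t \<Longrightarrow> 0 \<le> erlang_survival k l t"
  unfolding erlang_survival_def by (intro sum_nonneg) simp

lemma continuous_on_erlang_survival: "continuous_on A (erlang_survival k l)"
  unfolding erlang_survival_def by (intro continuous_intros) auto

lemma nn_integral_indicator_interval:
  fixes f :: "real \<Rightarrow> real"
  assumes cont: "continuous_on {a..b} f" and nonneg: "\<And>x. x \<in> {a..b} \<Longrightarrow> 0 \<le> f x"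
  shows "(\<integral>\<^sup>+x. ennreal (indicator {a..b} x * f x) \<partial>lborel) = ennreal (integral {a..b} f)"
proof (rule nn_integral_has_integral_lborel)
  show "(\<lambda>x. indicator {a..b} x * f x) \<in> borel_measurable borel"
    using borel_measurable_continuous_on_indicator[OF _ cont] by simp
  show "0 \<le> indicator {a..b} x * f x" for x
    using nonneg[of x] by (simp add: indicator_def)
  have "(f has_integral integral {a..b} f) {a..b}"
    using integrable_continuous_interval[OF cont] by (rule integrable_integral)
  then have "((\<lambda>x. if x \<in> {a..b} then f x else 0) has_integral integral {a..b} f) UNIV"
    by (simp only: has_integral_restrict_UNIV)
  moreover have "(\<lambda>x. indicator {a..b} x * f x) = (\<lambda>x. if x \<in> {a..b} then f x else 0)"
    by (simp add: fun_eq_iff indicator_def)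
  ultimately show "((\<lambda>x. indicator {a..b} x * f x) has_integral integral {a..b} f) UNIV"
    by simp
qed

context prob_space
begin

lemma prob_distributed_eq_point:
  assumes "distributed M lborel Y g"
  shows "prob {\<omega>\<in>space M. Y \<omega> = x} = 0"
proof -
  have "emeasure M (Y -` {x} \<inter> space M) = (\<integral>\<^sup>+y. g y * indicator {x} y \<partial>lborel)"
    using distributed_emeasure[OF assms] by simp
  also have "\<dots> = 0"
    by (intro nn_integral_zero' eventually_mono[OF AE_lborel_singleton[of x]]) simp
  finally show ?thesis
    by (simp add: measure_def vimage_def Int_def conj_commute)
qed

lemma prob_erlang_ge:
  assumes D: "distributed M lborel Y (erlang_density k l)" and l: "0 < l" and x: "0 \<le> x"
  shows "prob {\<omega>\<in>space M. x \<le> Y \<omega>} = erlang_survival k l x"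
proof -
  have [measurable]: "Y \<in> borel_measurable M"
    using distributed_measurable[OF D] by simp
  have "prob {\<omega>\<in>space M. x \<le> Y \<omega>} = prob {\<omega>\<in>space M. x < Y \<omega>} + prob {\<omega>\<in>space M. Y \<omega> = x}"
    by (subst finite_measure_Union[symmetric]) (auto intro!: arg_cong[where f = prob])
  also have "\<dots> = 1 - erlang_CDF k l x"
    using erlang_distributed_gt[OF D l x] prob_distributed_eq_point[OF D] by simp
  finally show ?thesis
    using x by (simp add: erlang_CDF_def erlang_survival_def)
qed

lemma prob_exponential_le:
  assumes D: "distributed M lborel Y (exponential_density l)" and l: "0 < l"
  shows "prob {\<omega>\<in>space M. Y \<omega> \<le> a} = (if 0 \<le> a then 1 - exp (- l * a) else 0)"
proof (cases "0 \<le> a")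
  case True
  then show ?thesis
    using exponential_distributedD_le[OF D True l] by (simp add: mult.commute)
next
  case False
  have [measurable]: "Y \<in> borel_measurable M"
    using distributed_measurable[OF D] by simp
  have "prob {\<omega>\<in>space M. Y \<omega> \<le> a} \<le> prob {\<omega>\<in>space M. Y \<omega> \<le> 0}"
    using False by (intro finite_measure_mono) auto
  also have "\<dots> = 0"
    using exponential_distributedD_le[OF D _ l, of 0] by simp
  finally show ?thesis
    using False by (simp add: measure_le_0_iff)
qed

lemma AE_exponential_pos:
  assumes D: "distributed M lborel Y (exponential_density l)" and l: "0 < l"
  shows "AE \<omega> in M. 0 < Y \<omega>"
proof -
  have [measurable]: "Y \<in> borel_measurable M"
    using distributed_measurable[OF D] by simp
  have "prob {\<omega>\<in>space M. \<not> 0 < Y \<omega>} = 0"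
    using prob_exponential_le[OF D l, of 0] by (simp add: not_less)
  then show ?thesis
    by (subst (asm) prob_Collect_eq_0) auto
qed

lemma AE_ex_ge_of_indep:
  fixes Y :: "'i \<Rightarrow> 'a \<Rightarrow> real" and e :: "nat \<Rightarrow> 'i"
  assumes ind: "indep_vars (\<lambda>_. borel) Y UNIV" and inj: "inj e"
    and bound: "\<And>k. prob {\<omega>\<in>space M. Y (e k) \<omega> < c} \<le> q" and q: "q < 1"
  shows "AE \<omega> in M. \<exists>k. c \<le> Y (e k) \<omega>"
proof -
  have [measurable]: "Y i \<in> borel_measurable M" for i
    using ind by (auto simp: indep_vars_def)
  define N where "N = {\<omega>\<in>space M. \<forall>k. Y (e k) \<omega> < c}"
  have q0: "0 \<le> q"
    using bound[of 0] measure_nonneg[of M] order_trans by blast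
  have "prob N \<le> q ^ Suc n" for n
  proof -
    have "prob N \<le> prob (\<Inter>i\<in>e ` {..n}. Y i -` {..<c} \<inter> space M)"
      unfolding N_def by (intro finite_measure_mono) auto
    also have "\<dots> = (\<Prod>k\<le>n. prob (Y (e k) -` {..<c} \<inter> space M))"
      using inj by (subst indep_varsD[OF ind]) (auto simp: prod.reindex inj_on_def inj_def)
    also have "\<dots> \<le> (\<Prod>k\<le>n. q)"
      using bound by (intro prod_mono) (auto simp: vimage_def Int_def conj_commute)
    finally show ?thesis
      by simp
  qed
  moreover have "(\<lambda>n. q ^ Suc n) \<longlonglongrightarrow> 0"
    using q0 q by (intro LIMSEQ_Suc LIMSEQ_power_zero) simp
  ultimately have "prob N \<le> 0"
    by (intro LIMSEQ_le_const[of "\<lambda>n. q ^ Suc n"]) auto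
  then have "AE \<omega> in M. \<not> (\<forall>k. Y (e k) \<omega> < c)"
    unfolding N_def by (subst prob_Collect_eq_0[symmetric]) (auto intro: antisym)
  then show ?thesis
    by (simp add: not_less)
qed

(* indep_var requires both variables to take values in the same type; composing with f and g
   allows the two sides of the joint distribution to live in different spaces. *)
lemma distr_indep_var_compose_pair:
  assumes ind: "indep_var S X T Y" and f: "f \<in> measurable S S'" and g: "g \<in> measurable T T'"
  shows "distr M S' (\<lambda>\<omega>. f (X \<omega>)) \<Otimes>\<^sub>M distr M T' (\<lambda>\<omega>. g (Y \<omega>)) =
    distr M (S' \<Otimes>\<^sub>M T') (\<lambda>\<omega>. (f (X \<omega>), g (Y \<omega>)))"
proof -
  have X: "X \<in> measurable M S" and Y: "Y \<in> measurable M T"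
    and joint: "distr M S X \<Otimes>\<^sub>M distr M T Y = distr M (S \<Otimes>\<^sub>M T) (\<lambda>\<omega>. (X \<omega>, Y \<omega>))"
    using ind by (simp_all add: indep_var_distribution_eq)
  have f': "f \<in> measurable (distr M S X) S'" and g': "g \<in> measurable (distr M T Y) T'"
    using f g by simp_all
  have "prob_space (distr (distr M T Y) T' g)"
    using g' by (intro prob_space.prob_space_distr[OF prob_space_distr[OF Y]])
  then have finite_g: "sigma_finite_measure (distr (distr M T Y) T' g)"
    by (rule prob_space_imp_sigma_finite)
  have "distr M S' (\<lambda>\<omega>. f (X \<omega>)) \<Otimes>\<^sub>M distr M T' (\<lambda>\<omega>. g (Y \<omega>)) =
      distr (distr M S X) S' f \<Otimes>\<^sub>M distr (distr M T Y) T' g"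
    using X Y f g by (simp add: distr_distr comp_def)
  also have "\<dots> = distr (distr M (S \<Otimes>\<^sub>M T) (\<lambda>\<omega>. (X \<omega>, Y \<omega>))) (S' \<Otimes>\<^sub>M T') (\<lambda>(x, y). (f x, g y))"
    unfolding joint[symmetric] by (rule pair_measure_distr[OF f' g' finite_g])
  also have "\<dots> = distr M (S' \<Otimes>\<^sub>M T') (\<lambda>\<omega>. (f (X \<omega>), g (Y \<omega>)))"
    using X Y f g by (subst distr_distr) (auto simp: comp_def)
  finally show ?thesis .
qed

lemma emeasure_Pair_density_of_product:
  assumes Y: "Y \<in> borel_measurable M" and Z: "Z \<in> measurable M N"
    and joint: "distr M borel Y \<Otimes>\<^sub>M distr M N Z = distr M (borel \<Otimes>\<^sub>M N) (\<lambda>\<omega>. (Y \<omega>, Z \<omega>))"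
    and D: "distributed M lborel Y g" and E: "E \<in> sets (borel \<Otimes>\<^sub>M N)"
  shows "emeasure M {\<omega>\<in>space M. (Y \<omega>, Z \<omega>) \<in> E} =
    (\<integral>\<^sup>+y. g y * emeasure M {\<omega>\<in>space M. (y, Z \<omega>) \<in> E} \<partial>lborel)"
proof -
  interpret Z: prob_space "distr M N Z"
    by (rule prob_space_distr[OF Z])
  have g: "g \<in> borel_measurable lborel"
    using distributed_borel_measurable[OF D] .
  have "distr M borel Y = distr M lborel Y"
    by (rule distr_cong) auto
  then have dY: "distr M borel Y = density lborel g"
    using distributed_distr_eq_density[OF D] by simp
  have E': "E \<in> sets (density lborel g \<Otimes>\<^sub>M distr M N Z)"
    using E by (simp cong: sets_pair_measure_cong)
  have slice: "emeasure (distr M N Z) (Pair y -` E) = emeasure M {\<omega>\<in>space M. (y, Z \<omega>) \<in> E}" for y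
    using Z sets_Pair1[OF E] by (subst emeasure_distr) (auto intro!: arg_cong[where f = "emeasure M"])
  have "emeasure M {\<omega>\<in>space M. (Y \<omega>, Z \<omega>) \<in> E} = emeasure (distr M (borel \<Otimes>\<^sub>M N) (\<lambda>\<omega>. (Y \<omega>, Z \<omega>))) E"
    using Y Z E by (subst emeasure_distr) (auto intro!: arg_cong[where f = "emeasure M"])
  also have "\<dots> = emeasure (density lborel g \<Otimes>\<^sub>M distr M N Z) E"
    using joint dY by simp
  also have "\<dots> = (\<integral>\<^sup>+y. emeasure (distr M N Z) (Pair y -` E) \<partial>density lborel g)"
    by (rule Z.emeasure_pair_measure_alt[OF E'])
  also have "\<dots> = (\<integral>\<^sup>+y. g y * emeasure (distr M N Z) (Pair y -` E) \<partial>lborel)"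
    using Z.measurable_emeasure_Pair[OF E'] by (intro nn_integral_density[OF g]) simp
  finally show ?thesis
    by (simp only: slice)
qed

lemma distributed_sum_image_exponential:
  fixes Y :: "'i \<Rightarrow> 'a \<Rightarrow> real" and e :: "nat \<Rightarrow> 'i"
  assumes ind: "indep_vars (\<lambda>_. borel) Y UNIV" and inj: "inj e"
    and D: "\<And>k. distributed M lborel (Y (e k)) (exponential_density l)" and l: "0 < l"
  shows "distributed M lborel (\<lambda>\<omega>. \<Sum>i\<in>e ` {..n}. Y i \<omega>) (erlang_density n l)"
proof -
  have "distributed M lborel (\<lambda>\<omega>. \<Sum>i\<in>e ` {..n}. Y i \<omega>) (erlang_density (card (e ` {..n}) - 1) l)"
    using D l by (intro exponential_distributed_sum indep_vars_subset[OF ind]) auto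
  then show ?thesis
    using inj by (simp add: card_image inj_on_subset)
qed

lemma indep_vars_sum_blocks:
  assumes ind: "indep_vars (\<lambda>_. borel) Y UNIV" and K: "disjoint_family_on K L"
  shows "indep_vars (\<lambda>_. borel) (\<lambda>l \<omega>. \<Sum>i\<in>K l. Y i \<omega> :: real) L"
proof -
  have "indep_vars (\<lambda>l. PiM (K l) (\<lambda>_. borel)) (\<lambda>l \<omega>. restrict (\<lambda>i. Y i \<omega>) (K l)) L"
    by (rule indep_vars_restrict[OF ind]) (use K in auto)
  then have "indep_vars (\<lambda>_. borel) (\<lambda>l \<omega>. \<Sum>i\<in>K l. restrict (\<lambda>i. Y i \<omega>) (K l) i) L"
    by (rule indep_vars_compose2[where Y = "\<lambda>l v. \<Sum>i\<in>K l. v i"]) auto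
  then show ?thesis
    by (rule indep_vars_cong[THEN iffD1, rotated 3]) auto
qed

lemma emeasure_race_eq_nn_integral:
  fixes V :: "nat \<Rightarrow> 'a \<Rightarrow> real"
  assumes ind: "indep_vars (\<lambda>_. borel) V {0, 1, 2, 3}" and D0: "distributed M lborel (V 0) g"
  shows "emeasure M {\<omega>\<in>space M. V 0 \<omega> + V 1 \<omega> \<le> d \<and> V 0 \<omega> \<le> V 2 \<omega> \<and> V 0 \<omega> \<le> V 3 \<omega>} =
    (\<integral>\<^sup>+t. g t * emeasure M {\<omega>\<in>space M. V 1 \<omega> \<le> d - t \<and> t \<le> V 2 \<omega> \<and> t \<le> V 3 \<omega>} \<partial>lborel)"
proof -
  have V[measurable]: "V 0 \<in> borel_measurable M" "V 1 \<in> borel_measurable M"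
    "V 2 \<in> borel_measurable M" "V 3 \<in> borel_measurable M"
    using ind by (auto simp: indep_vars_def)
  define N where "N = PiM {1, 2, 3} (\<lambda>_::nat. borel :: real measure)"
  define W where "W \<omega> = restrict (\<lambda>i. V i \<omega>) {1, 2, 3}" for \<omega>
  have "indep_var (PiM {0} (\<lambda>_. borel)) (\<lambda>\<omega>. restrict (\<lambda>i. V i \<omega>) {0}) N W"
    unfolding N_def W_def by (rule indep_var_restrict[OF ind]) auto
  moreover have "(\<lambda>v. v 0) \<in> measurable (PiM {0} (\<lambda>_. borel)) (borel :: real measure)"
    by (rule measurable_component_singleton) simp
  ultimately have "distr M borel (\<lambda>\<omega>. restrict (\<lambda>i. V i \<omega>) {0} 0) \<Otimes>\<^sub>M distr M N W =
      distr M (borel \<Otimes>\<^sub>M N) (\<lambda>\<omega>. (restrict (\<lambda>i. V i \<omega>) {0} 0, W \<omega>))"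
    by (rule distr_indep_var_compose_pair[where g = "\<lambda>w. w"]) simp
  then have joint: "distr M borel (V 0) \<Otimes>\<^sub>M distr M N W = distr M (borel \<Otimes>\<^sub>M N) (\<lambda>\<omega>. (V 0 \<omega>, W \<omega>))"
    by simp
  have W_measurable: "W \<in> measurable M N"
    unfolding N_def W_def by (rule measurable_restrict) (use V in auto)
  have [measurable]: "(\<lambda>p. snd p 1) \<in> borel_measurable (borel \<Otimes>\<^sub>M N)"
    "(\<lambda>p. snd p 2) \<in> borel_measurable (borel \<Otimes>\<^sub>M N)" "(\<lambda>p. snd p 3) \<in> borel_measurable (borel \<Otimes>\<^sub>M N)"
    unfolding N_def by (auto intro!: measurable_compose[OF measurable_snd measurable_component_singleton])
  define E where "E = {p \<in> space (borel \<Otimes>\<^sub>M N). fst p + snd p 1 \<le> d \<and> fst p \<le> snd p 2 \<and> fst p \<le> snd p 3}"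
  have "E \<in> sets (borel \<Otimes>\<^sub>M N)"
    unfolding E_def by measurable
  note condition = emeasure_Pair_density_of_product[OF V(1) W_measurable joint D0 this]
  have "{\<omega>\<in>space M. V 0 \<omega> + V 1 \<omega> \<le> d \<and> V 0 \<omega> \<le> V 2 \<omega> \<and> V 0 \<omega> \<le> V 3 \<omega>} =
      {\<omega>\<in>space M. (V 0 \<omega>, W \<omega>) \<in> E}"
    and "{\<omega>\<in>space M. V 1 \<omega> \<le> d - t \<and> t \<le> V 2 \<omega> \<and> t \<le> V 3 \<omega>} = {\<omega>\<in>space M. (t, W \<omega>) \<in> E}" for t
    by (auto simp: E_def W_def N_def space_pair_measure space_PiM)
  with condition show ?thesis
    by simp
qed

lemma emeasure_race_slice:
  fixes V :: "nat \<Rightarrow> 'a \<Rightarrow> real"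
  assumes ind: "indep_vars (\<lambda>_. borel) V {0, 1, 2, 3}"
  shows "emeasure M {\<omega>\<in>space M. V 1 \<omega> \<le> d - t \<and> t \<le> V 2 \<omega> \<and> t \<le> V 3 \<omega>} = ennreal
      (prob {\<omega>\<in>space M. V 1 \<omega> \<le> d - t} * prob {\<omega>\<in>space M. t \<le> V 2 \<omega>} * prob {\<omega>\<in>space M. t \<le> V 3 \<omega>})"
proof -
  define A where "A i = (if i = 1 then {..d - t} else {t..})" for i :: nat
  have "prob (\<Inter>i\<in>{1, 2, 3}. V i -` A i \<inter> space M) = (\<Prod>i\<in>{1, 2, 3}. prob (V i -` A i \<inter> space M))"
    by (rule indep_varsD[OF ind]) (auto simp: A_def)
  moreover have "(\<Inter>i\<in>{1, 2, 3}. V i -` A i \<inter> space M) =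
      {\<omega>\<in>space M. V 1 \<omega> \<le> d - t \<and> t \<le> V 2 \<omega> \<and> t \<le> V 3 \<omega>}"
    by (auto simp: A_def)
  ultimately show ?thesis
    by (simp add: emeasure_eq_measure A_def vimage_def Int_def conj_commute mult.assoc)
qed

lemma prob_exponential_race:
  fixes V :: "nat \<Rightarrow> 'a \<Rightarrow> real"
  assumes ind: "indep_vars (\<lambda>_. borel) V {0, 1, 2, 3}"
    and D0: "distributed M lborel (V 0) (exponential_density mu)"
    and D1: "distributed M lborel (V 1) (exponential_density mu)"
    and D2: "distributed M lborel (V 2) (erlang_density k2 l2)"
    and D3: "distributed M lborel (V 3) (erlang_density k3 l3)"
    and mu: "0 < mu" and l2: "0 < l2" and l3: "0 < l3"
  shows "prob {\<omega>\<in>space M. V 0 \<omega> + V 1 \<omega> \<le> d \<and> V 0 \<omega> \<le> V 2 \<omega> \<and> V 0 \<omega> \<le> V 3 \<omega>} =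
    integral {0..d} (\<lambda>t. mu * exp (- mu * t) * erlang_survival k2 l2 t * erlang_survival k3 l3 t
                         * (1 - exp (- mu * (d - t))))"
    (is "_ = integral {0..d} ?F")
proof -
  note slice = emeasure_race_slice[OF ind]
  have integrand: "ennreal (exponential_density mu t) *
      emeasure M {\<omega>\<in>space M. V 1 \<omega> \<le> d - t \<and> t \<le> V 2 \<omega> \<and> t \<le> V 3 \<omega>} =
      ennreal (indicator {0..d} t * ?F t)" for t
  proof (cases "0 \<le> t \<and> t \<le> d")
    case True
    define P where "P = (1 - exp (- mu * (d - t))) * erlang_survival k2 l2 t * erlang_survival k3 l3 t"
    from True have t: "0 \<le> t" and dt: "0 \<le> d - t"
      by simp_all
    have "0 \<le> 1 - exp (- mu * (d - t))"
      using mu dt by simp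
    then have "0 \<le> P"
      unfolding P_def using l2 l3 t by (intro mult_nonneg_nonneg erlang_survival_nonneg) simp_all
    have "exponential_density mu t = mu * exp (- mu * t)"
      using t by (simp add: exponential_density_def mult.commute)
    moreover have "emeasure M {\<omega>\<in>space M. V 1 \<omega> \<le> d - t \<and> t \<le> V 2 \<omega> \<and> t \<le> V 3 \<omega>} = ennreal P"
      unfolding slice prob_exponential_le[OF D1 mu] if_P[OF dt] prob_erlang_ge[OF D2 l2 t]
        prob_erlang_ge[OF D3 l3 t] P_def ..
    ultimately have "ennreal (exponential_density mu t) *
        emeasure M {\<omega>\<in>space M. V 1 \<omega> \<le> d - t \<and> t \<le> V 2 \<omega> \<and> t \<le> V 3 \<omega>} =
        ennreal (mu * exp (- mu * t)) * ennreal P"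
      by (simp only:)
    also have "\<dots> = ennreal (mu * exp (- mu * t) * P)"
      using mu \<open>0 \<le> P\<close> by (intro ennreal_mult[symmetric]) simp_all
    also have "\<dots> = ennreal (indicator {0..d} t * ?F t)"
      using True unfolding P_def by (simp add: mult_ac)
    finally show ?thesis .
  next
    case False
    then show ?thesis
      unfolding slice prob_exponential_le[OF D1 mu]
      by (auto simp: exponential_density_def indicator_def)
  qed
  have cont: "continuous_on {0..d} ?F"
    by (intro continuous_intros continuous_on_erlang_survival)
  have nonneg: "0 \<le> ?F t" if "t \<in> {0..d}" for t
    using that mu l2 l3 erlang_survival_nonneg[of l2 t k2] erlang_survival_nonneg[of l3 t k3]
    by (auto intro!: mult_nonneg_nonneg)
  have "emeasure M {\<omega>\<in>space M. V 0 \<omega> + V 1 \<omega> \<le> d \<and> V 0 \<omega> \<le> V 2 \<omega> \<and> V 0 \<omega> \<le> V 3 \<omega>} =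
      (\<integral>\<^sup>+t. ennreal (indicator {0..d} t * ?F t) \<partial>lborel)"
    unfolding emeasure_race_eq_nn_integral[OF ind D0] integrand ..
  also have "\<dots> = ennreal (integral {0..d} ?F)"
    by (rule nn_integral_indicator_interval[OF cont nonneg])
  finally have "prob {\<omega>\<in>space M. V 0 \<omega> + V 1 \<omega> \<le> d \<and> V 0 \<omega> \<le> V 2 \<omega> \<and> V 0 \<omega> \<le> V 3 \<omega>} =
      enn2real (ennreal (integral {0..d} ?F))"
    by (simp only: measure_def)
  moreover have "0 \<le> integral {0..d} ?F"
    by (rule integral_nonneg[OF integrable_continuous_interval[OF cont] nonneg])
  ultimately show ?thesis
    by (metis enn2real_ennreal)
qed

end

section \<open>The two-flow model\<close>

locale two_flow_model = prob_space M
  for M :: "'a measure" and X :: "rv_idx \<Rightarrow> 'a \<Rightarrow> real" and lam1 lam2 mu d :: real +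
  assumes lam1_pos: "0 < lam1" and lam2_pos: "0 < lam2" and mu_pos: "0 < mu" and d_pos: "0 < d"
    and indep: "indep_vars (\<lambda>_. borel) X UNIV"
    and distributed_Resid: "distributed M lborel (X Resid) (exponential_density mu)"
    and distributed_Serv: "distributed M lborel (X Serv) (exponential_density mu)"
    and distributed_IA1: "\<And>k. distributed M lborel (X (IA1 k)) (exponential_density lam1)"
    and distributed_IA2: "\<And>k. distributed M lborel (X (IA2 k)) (exponential_density lam2)"
begin

lemma measurable_X[measurable]: "X i \<in> borel_measurable M"
  using indep by (auto simp: indep_vars_def)

lemma measurable_arr_time[measurable]: "(\<lambda>\<omega>. arr_time X f n \<omega>) \<in> borel_measurable M"
  unfolding arr_time_def by measurable

lemma AE_regular_outcome: "AE \<omega> in M. regular_outcome X d \<omega>"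
proof -
  have positive: "AE \<omega> in M. \<forall>k. 0 < X (e k) \<omega>"
    if "\<And>k. distributed M lborel (X (e k)) (exponential_density l)" and "0 < l"
    for e :: "nat \<Rightarrow> rv_idx" and l
    unfolding AE_all_countable by (intro allI AE_exponential_pos[OF that])
  have eventually_large: "AE \<omega> in M. \<exists>k. d \<le> X (e k) \<omega>"
    if "inj e" and D: "\<And>k. distributed M lborel (X (e k)) (exponential_density l)" and "0 < l"
    for e :: "nat \<Rightarrow> rv_idx" and l
  proof (rule AE_ex_ge_of_indep[OF indep \<open>inj e\<close>])
    show "prob {\<omega>\<in>space M. X (e k) \<omega> < d} \<le> 1 - exp (- l * d)" for k
    proof -
      have "prob {\<omega>\<in>space M. X (e k) \<omega> < d} \<le> prob {\<omega>\<in>space M. X (e k) \<omega> \<le> d}"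
        by (intro finite_measure_mono) auto
      then show ?thesis
        using prob_exponential_le[OF D \<open>0 < l\<close>, of k d] d_pos by simp
    qed
    show "1 - exp (- l * d) < 1"
      using \<open>0 < l\<close> d_pos by simp
  qed
  have "inj IA1" "inj IA2"
    by (simp_all add: inj_def)
  note large = eventually_large[OF \<open>inj IA1\<close> distributed_IA1 lam1_pos]
    eventually_large[OF \<open>inj IA2\<close> distributed_IA2 lam2_pos]
  show ?thesis
    using AE_exponential_pos[OF distributed_Serv mu_pos]
      positive[of IA1, OF distributed_IA1 lam1_pos] positive[of IA2, OF distributed_IA2 lam2_pos] large
    unfolding regular_outcome_def by eventually_elim (simp add: ia_def)
qed

lemma pred_arrivals_eq_Nil[measurable]: "Measurable.pred M (\<lambda>\<omega>. arrivals X \<omega> = [])"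
  unfolding arrivals_eq_Nil_iff arr_times_eq_empty_iff
  unfolding arr_times_def infinite_values_below_iff
  by measurable

lemma pred_ex_arrivals_eq_single[measurable]:
  "Measurable.pred M (\<lambda>\<omega>. \<exists>t. arrivals X \<omega> = [(t, 2)] \<and> t \<le> d \<and> X Resid \<omega> \<le> max d (t + d))"
  unfolding ex_arrivals_eq_single_iff arr_times_eq_empty_iff
  unfolding arr_times_def ex_values_below_eq_singleton_iff
  by measurable

lemma prob_arrival_race:
  "prob {\<omega>\<in>space M. X Resid \<omega> + X Serv \<omega> \<le> d \<and> X Resid \<omega> \<le> arr_time X 1 j \<omega> \<and> X Resid \<omega> \<le> arr_time X 2 k \<omega>} =
    integral {0..d} (\<lambda>t. mu * exp (- mu * t) * erlang_survival j lam1 t * erlang_survival k lam2 t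
                         * (1 - exp (- mu * (d - t))))"
proof -
  define K where "K l = (if l = 0 then {Resid} else if l = 1 then {Serv}
      else if l = 2 then IA1 ` {..j} else IA2 ` {..k})" for l :: nat
  define V where "V l \<omega> = (\<Sum>i\<in>K l. X i \<omega>)" for l \<omega>
  have V: "V 0 = X Resid" "V 1 = X Serv" "V 2 = arr_time X 1 j" "V 3 = arr_time X 2 k"
    by (simp_all add: fun_eq_iff V_def K_def arr_time_def ia_def sum.reindex inj_on_def)
  have ind: "indep_vars (\<lambda>_. borel) V {0, 1, 2, 3}"
    unfolding V_def by (rule indep_vars_sum_blocks[OF indep]) (auto simp: disjoint_family_on_def K_def)
  have "inj IA1" "inj IA2"
    by (simp_all add: inj_def)
  then have "distributed M lborel (V 2) (erlang_density j lam1)"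
    and "distributed M lborel (V 3) (erlang_density k lam2)"
    using distributed_sum_image_exponential[OF indep _ distributed_IA1 lam1_pos]
      distributed_sum_image_exponential[OF indep _ distributed_IA2 lam2_pos]
    by (simp_all add: V_def[abs_def] K_def)
  with ind have "prob {\<omega>\<in>space M. V 0 \<omega> + V 1 \<omega> \<le> d \<and> V 0 \<omega> \<le> V 2 \<omega> \<and> V 0 \<omega> \<le> V 3 \<omega>} =
      integral {0..d} (\<lambda>t. mu * exp (- mu * t) * erlang_survival j lam1 t * erlang_survival k lam2 t
                           * (1 - exp (- mu * (d - t))))"
    using distributed_Resid distributed_Serv
    by (intro prob_exponential_race mu_pos lam1_pos lam2_pos) (simp_all only: V)
  then show ?thesis
    by (simp only: V)
qed

lemma succ_prob_Idle: "succ_prob M X d Idle = 1 - exp (- mu * d)"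
  using prob_exponential_le[OF distributed_Serv mu_pos, of d] d_pos
  by (simp add: succ_prob_def success_def)

lemma succ_prob_Busy_nat1:
  assumes "arrive d 0 1 True b = BNat 1 True d"
  shows "succ_prob M X d (Busy b) =
    integral {0..d} (\<lambda>t. mu * exp (- mu * t) * erlang_survival 0 lam1 t * erlang_survival 1 lam2 t
                         * (1 - exp (- mu * (d - t))))"
proof -
  have "AE \<omega> in M. success d (Busy b) (X Resid \<omega>) (X Serv \<omega>) (arrivals X \<omega>) \<longleftrightarrow>
      X Resid \<omega> + X Serv \<omega> \<le> d \<and> X Resid \<omega> \<le> arr_time X 1 0 \<omega> \<and> X Resid \<omega> \<le> arr_time X 2 1 \<omega>"
    using AE_regular_outcome by eventually_elim (rule success_nat1_regular[OF _ assms])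
  moreover have "{\<omega>\<in>space M. success d (Busy b) (X Resid \<omega>) (X Serv \<omega>) (arrivals X \<omega>)} \<in> sets M"
    unfolding success_nat1_iff[OF assms] by measurable
  ultimately show ?thesis
    unfolding succ_prob_def prob_arrival_race[symmetric] by (rule prob_eq_AE) measurable
qed

lemma succ_prob_Busy_coded:
  assumes "arrive d 0 1 True b = BCoded True d"
  shows "succ_prob M X d (Busy b) =
    integral {0..d} (\<lambda>t. mu * exp (- mu * t) * erlang_survival 0 lam1 t * erlang_survival 0 lam2 t
                         * (1 - exp (- mu * (d - t))))"
proof -
  have "AE \<omega> in M. success d (Busy b) (X Resid \<omega>) (X Serv \<omega>) (arrivals X \<omega>) \<longleftrightarrow>
      X Resid \<omega> + X Serv \<omega> \<le> d \<and> X Resid \<omega> \<le> arr_time X 1 0 \<omega> \<and> X Resid \<omega> \<le> arr_time X 2 0 \<omega>"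
    using AE_regular_outcome by eventually_elim (rule success_coded_regular[OF _ assms])
  moreover have "{\<omega>\<in>space M. success d (Busy b) (X Resid \<omega>) (X Serv \<omega>) (arrivals X \<omega>)} \<in> sets M"
    unfolding success_coded_iff[OF assms] by measurable
  ultimately show ?thesis
    unfolding succ_prob_def prob_arrival_race[symmetric] by (rule prob_eq_AE) measurable
qed

end

theorem mainTheorem5:
  fixes M :: "'a measure" and X :: "rv_idx \<Rightarrow> 'a \<Rightarrow> real"
    and lam1 lam2 mu d :: real
  assumes "prob_space M"
    and "lam1 > 0" and "lam2 > 0" and "mu > 0" and "d > 0"
    and "prob_space.indep_vars M (\<lambda>_. borel) X UNIV"
    and "distributed M lborel (X Resid) (exponential_density mu)"
    and "distributed M lborel (X Serv) (exponential_density mu)"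
    and "\<And>k. distributed M lborel (X (IA1 k)) (exponential_density lam1)"
    and "\<And>k. distributed M lborel (X (IA2 k)) (exponential_density lam2)"
  shows "succ_prob M X d Idle = 1 - exp (- mu * d)
    \<and> succ_prob M X d (Busy BEmpty) =
        integral {0..d} (\<lambda>t. mu * exp (- mu * t) * exp (- lam1 * t) * (1 + lam2 * t)
                               * exp (- lam2 * t) * (1 - exp (- mu * (d - t))))
    \<and> (\<forall>dl0. 0 < dl0 \<and> dl0 \<le> d \<longrightarrow>
          succ_prob M X d (Busy (BNat 1 False dl0)) = succ_prob M X d (Busy BEmpty)
        \<and> succ_prob M X d (Busy (BCoded False dl0)) = succ_prob M X d (Busy BEmpty)
        \<and> succ_prob M X d (Busy (BNat 2 False dl0)) =
            integral {0..d} (\<lambda>t. mu * exp (- mu * t) * exp (- lam1 * t)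
                                   * exp (- lam2 * t) * (1 - exp (- mu * (d - t)))))"
proof -
  interpret two_flow_model M X lam1 lam2 mu d
    by (intro two_flow_model.intro two_flow_model_axioms.intro) (fact assms)+
  have same_as_empty: "succ_prob M X d (Busy b) = succ_prob M X d (Busy BEmpty)"
    if "arrive d 0 1 True b = BNat 1 True d" for b
    by (simp only: succ_prob_Busy_nat1[OF that] succ_prob_Busy_nat1[OF arrive_tagged_BEmpty])
  have empty: "succ_prob M X d (Busy BEmpty) =
      integral {0..d} (\<lambda>t. mu * exp (- mu * t) * exp (- lam1 * t) * (1 + lam2 * t)
                           * exp (- lam2 * t) * (1 - exp (- mu * (d - t))))"
    unfolding succ_prob_Busy_nat1[OF arrive_tagged_BEmpty] erlang_survival_0 erlang_survival_1 mult.assoc ..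
  have nat2: "succ_prob M X d (Busy (BNat 2 False dl)) =
      integral {0..d} (\<lambda>t. mu * exp (- mu * t) * exp (- lam1 * t)
                           * exp (- lam2 * t) * (1 - exp (- mu * (d - t))))"
    if "0 < dl" and "dl \<le> d" for dl
    unfolding succ_prob_Busy_coded[OF arrive_tagged_BNat2[OF that]] erlang_survival_0 ..
  show ?thesis
    using succ_prob_Idle empty nat2 same_as_empty[OF arrive_tagged_BNat1] same_as_empty[OF arrive_tagged_BCoded]
    by blast
qed

end
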